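(* Consider a birth-and-death process on $\{0,1,2,\dots\}$ whose birth rates $\lambda_n$ and death rates $\mu_n$ all belong to $(0,\infty)$. The process is transient if there exist $c>1$, an integer $K\ge1$ and a number $n_0$ such that for all $n>n_0$ $$\frac{\lambda_n}{\mu_n}\ge 1+\frac1n+\sum_{k=1}^{K-1}\frac{1}{n\prod_{j=1}^{k}\ln_{(j)}n}+\frac{c}{n\prod_{k=1}^{K}\ln_{(k)}n},$$ and it is recurrent if there exist an integer $K\ge1$ and a number $n_0$ such that for all $n>n_0$ $$\frac{\lambda_n}{\mu_n}\le 1+\frac1n+\sum_{k=1}^{K}\frac{1}{n\prod_{j=1}^{k}\ln_{(j)}n}.$$
   Context: $\ln_{(k)}x$ denotes the $k$-fold iterated natural logarithm: $\ln_{(1)}x=\ln x$ and $\ln_{(k)}x=\ln_{(k-1)}(\ln x)$ for $k\ge2$. An empty sum equals $0$. *)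

theory Defs
  imports Complex_Main
begin

fun iln :: "nat \<Rightarrow> real \<Rightarrow> real" where
  "iln 0 x = x"
| "iln (Suc k) x = ln (iln k x)"

text \<open>Birth-and-death process on {0,1,2,...} with birth rates lam n and death rates mu n.
  Recurrence/transience is that of its embedded jump chain: from state i > 0 it jumps
  to i+1 with probability lam i / (lam i + mu i) and to i-1 with probability
  mu i / (lam i + mu i); from state 0 it jumps to 1.
  bd_hit lam mu m i = probability, starting from i, of being in state 0 at some time <= m.\<close>
fun bd_hit :: "(nat \<Rightarrow> real) \<Rightarrow> (nat \<Rightarrow> real) \<Rightarrow> nat \<Rightarrow> nat \<Rightarrow> real" where
  "bd_hit lam mu 0 i = (if i = 0 then 1 else 0)"
| "bd_hit lam mu (Suc m) i =
     (if i = 0 then 1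
      else lam i / (lam i + mu i) * bd_hit lam mu m (Suc i)
         + mu i / (lam i + mu i) * bd_hit lam mu m (i - 1))"

text \<open>Probability of ever returning to 0 when started at 0 (the first jump goes to 1).\<close>
definition bd_return_prob :: "(nat \<Rightarrow> real) \<Rightarrow> (nat \<Rightarrow> real) \<Rightarrow> real" where
  "bd_return_prob lam mu = (SUP m. bd_hit lam mu m 1)"

definition bd_recurrent :: "(nat \<Rightarrow> real) \<Rightarrow> (nat \<Rightarrow> real) \<Rightarrow> bool" where
  "bd_recurrent lam mu \<longleftrightarrow> bd_return_prob lam mu = 1"

definition bd_transient :: "(nat \<Rightarrow> real) \<Rightarrow> (nat \<Rightarrow> real) \<Rightarrow> bool" where
  "bd_transient lam mu \<longleftrightarrow> \<not> bd_recurrent lam mu"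

end

theory Submission
  imports Defs "HOL-Real_Asymp.Real_Asymp"
begin

(* The embedded chain is recurrent iff the series of rho n = (mu 1 ... mu n) / (lam 1 ... lam n)
   diverges. Write L_k = ln_(1) + ... + ln_(k); then exp (- L_k x) = 1 / (x ln x ... ln_(k-1) x)
   is the derivative of ln_(k), and the hypotheses compare lam n / mu n with 1 + L_k'(n) (plus
   c times the next term). Since L_k is concave, 1 + L_k'(n+1) <= exp (L_k (n+1) - L_k n), so the
   recurrence hypothesis gives rho n >= C exp (- L_k n), a divergent Bertrand series. For
   transience pick 1 < c' < c and F = L_K + c' ln_(K+1): then exp (F (n+1) - F n) <= 1 + F'(n) +
   F'(n)^2, and F'(n)^2 = O(1/n^2) is eventually absorbed by (c - c') exp (- L_(K+1) n); hence
   rho n <= C exp (- F (n+1)), a convergent Bertrand series. *)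

section \<open>Iterated logarithms\<close>

fun tower :: "nat \<Rightarrow> real" where
  "tower 0 = 0"
| "tower (Suc k) = exp (tower k)"

lemma tower_nonneg: "tower k \<ge> 0"
  by (induction k) auto

lemma tower_Suc_ge: "tower k + 1 \<le> tower (Suc k)"
  by (simp add: add.commute)

lemma tower_mono: "k \<le> m \<Longrightarrow> tower k \<le> tower m"
proof (induction m)
  case (Suc m)
  then show ?case using tower_Suc_ge[of m] by (cases "k = Suc m") auto
qed simp

lemma tower_less_mono: "k \<le> m \<Longrightarrow> tower m < x \<Longrightarrow> tower k < x"
  using tower_mono by (rule le_less_trans)

lemma tower_less_iln: "tower (k + j) < x \<Longrightarrow> tower k < iln j x"
proof (induction j arbitrary: k)
  case (Suc j)
  then have "exp (tower k) < iln j x" using Suc.IH[of "Suc k"] by simp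
  then show ?case by (metis exp_less_cancel_iff exp_ln exp_gt_zero iln.simps(2) less_trans)
qed simp

lemma iln_pos: "tower j < x \<Longrightarrow> 0 < iln j x"
  using tower_less_iln[of 0 j x] by simp

lemma one_less_iln: "tower (Suc j) < x \<Longrightarrow> 1 < iln j x"
  using tower_less_iln[of 1 j x] by simp

declare tower.simps(2) [simp del]

lemma iln_mono: "tower j < x \<Longrightarrow> x \<le> y \<Longrightarrow> iln j x \<le> iln j y"
proof (induction j)
  case (Suc j)
  have "tower j < x" using Suc.prems tower_Suc_ge[of j] by simp
  with Suc have "iln j x \<le> iln j y" by simp
  moreover have "0 < iln j x" using iln_pos \<open>tower j < x\<close> by blast
  ultimately show ?case by simp
qed simp

lemma iln_Suc_le: "tower (Suc j) < x \<Longrightarrow> iln (Suc j) x \<le> iln j x"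
  using one_less_iln[of j x] by (simp add: ln_bound)

lemma filterlim_iln_at_top: "filterlim (iln k) at_top at_top"
proof (induction k)
  case (Suc k)
  have "iln (Suc k) = (\<lambda>x. ln (iln k x))" by (rule ext) simp
  then show ?case using filterlim_compose[OF ln_at_top Suc.IH] by simp
qed (simp add: filterlim_ident)

definition iln_sum :: "nat \<Rightarrow> real \<Rightarrow> real" where
  "iln_sum k x = (\<Sum>j=1..k. iln j x)"

text \<open>diln k is the derivative of iln k.\<close>
definition diln :: "nat \<Rightarrow> real \<Rightarrow> real" where
  "diln k x = exp (- iln_sum k x)"

lemma iln_sum_Suc: "iln_sum (Suc k) x = iln_sum k x + iln (Suc k) x"
  by (simp add: iln_sum_def)

lemma diln_pos: "0 < diln k x"
  by (simp add: diln_def)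

lemma diln_1: "0 < x \<Longrightarrow> diln 1 x = 1 / x"
  by (simp add: diln_def iln_sum_def exp_minus inverse_eq_divide)

lemma DERIV_iln: "tower k < x \<Longrightarrow> (iln k has_real_derivative diln k x) (at x)"
proof (induction k arbitrary: x)
  case 0 then show ?case by (simp add: diln_def iln_sum_def)
next
  case (Suc k)
  have "tower k < x" using Suc.prems tower_Suc_ge[of k] by simp
  have pos: "0 < iln k x" using one_less_iln Suc.prems by (meson less_trans zero_less_one)
  have "((\<lambda>x. ln (iln k x)) has_real_derivative (1 / iln k x) * diln k x) (at x)"
    by (rule DERIV_chain2[OF DERIV_ln_divide[OF pos] Suc.IH[OF \<open>tower k < x\<close>]])
  moreover have "(1 / iln k x) * diln k x = diln (Suc k) x"
    using pos by (simp add: diln_def iln_sum_Suc exp_diff exp_minus field_simps)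
  moreover have "iln (Suc k) = (\<lambda>x. ln (iln k x))" by (rule ext) simp
  ultimately show ?case by simp
qed

lemma DERIV_iln_sum:
  "tower k < x \<Longrightarrow> (iln_sum k has_real_derivative (\<Sum>j=1..k. diln j x)) (at x)"
  unfolding iln_sum_def[abs_def]
  by (intro DERIV_sum DERIV_iln) (auto intro: tower_less_mono)

lemma diln_Suc_eq: "tower (Suc k) < x \<Longrightarrow> diln (Suc k) x = 1 / (x * (\<Prod>j=1..k. iln j x))"
proof (induction k)
  case 0 then show ?case using diln_1[of x] tower_nonneg[of "Suc 0"] by simp
next
  case (Suc k)
  have "tower (Suc k) < x" using Suc.prems tower_Suc_ge[of "Suc k"] by simp
  have pos: "0 < iln (Suc k) x" using one_less_iln Suc.prems by (meson less_trans zero_less_one)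
  have "diln (Suc (Suc k)) x = diln (Suc k) x / iln (Suc k) x"
    using pos by (simp add: diln_def iln_sum_Suc[of "Suc k"] exp_diff exp_minus field_simps)
  then show ?case using Suc.IH[OF \<open>tower (Suc k) < x\<close>] by (simp add: prod.cl_ivl_Suc)
qed

lemma sum_inverse_prod_iln_eq:
  "tower (Suc K) < x \<Longrightarrow>
    1 / x + (\<Sum>k=1..K. 1 / (x * (\<Prod>j=1..k. iln j x))) = (\<Sum>j=1..Suc K. diln j x)"
proof (induction K)
  case 0 then show ?case using diln_1[of x] tower_nonneg[of "Suc 0"] by simp
next
  case (Suc K)
  have "tower (Suc K) < x" using Suc.prems tower_Suc_ge[of "Suc K"] by linarith
  then show ?case using Suc.IH diln_Suc_eq[OF Suc.prems] by (simp add: sum.cl_ivl_Suc)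
qed

lemma iln_sum_mono: "tower k < x \<Longrightarrow> x \<le> y \<Longrightarrow> iln_sum k x \<le> iln_sum k y"
  unfolding iln_sum_def
  by (intro sum_mono iln_mono) (auto intro: tower_less_mono)

lemma diln_antimono: "tower k < x \<Longrightarrow> x \<le> y \<Longrightarrow> diln k y \<le> diln k x"
  using iln_sum_mono[of k x y] by (simp add: diln_def)

lemma sum_diln_antimono:
  "tower k < x \<Longrightarrow> x \<le> y \<Longrightarrow> (\<Sum>j=1..k. diln j y) \<le> (\<Sum>j=1..k. diln j x)"
  by (intro sum_mono diln_antimono) (auto intro: tower_less_mono)

lemma diln_le_diln_1: "1 \<le> j \<Longrightarrow> tower j < x \<Longrightarrow> diln j x \<le> diln 1 x"
proof -
  assume j: "1 \<le> j" "tower j < x"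
  have "iln_sum 1 x \<le> iln_sum j x" unfolding iln_sum_def
  proof (rule sum_mono2)
    fix i assume "i \<in> {1..j} - {1..1}"
    then show "0 \<le> iln i x" using iln_pos[of i x] tower_mono[of i j] j by auto
  qed (use j in auto)
  then show ?thesis by (simp add: diln_def)
qed

lemma iln_sum_Suc_le: "tower (Suc k) < x \<Longrightarrow> iln_sum (Suc k) x \<le> ln x + real k * ln (ln x)"
proof (induction k)
  case 0 then show ?case by (simp add: iln_sum_def)
next
  case (Suc k)
  note x = \<open>tower (Suc (Suc k)) < x\<close>
  have "tower (Suc k) < x" using x tower_Suc_ge[of "Suc k"] by linarith
  have "iln (Suc j) x \<le> ln x" if "j \<le> Suc k" for j
    using that
  proof (induction j)
    case (Suc j)
    have "tower (Suc (Suc j)) < x"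
      using x Suc.prems tower_mono[of "Suc (Suc j)" "Suc (Suc k)"] by (meson Suc_le_mono le_less_trans)
    with Suc show ?case using iln_Suc_le by fastforce
  qed simp
  then have "ln (iln (Suc k) x) \<le> ln (ln x)"
    using iln_pos[OF \<open>tower (Suc k) < x\<close>] by (intro ln_mono) auto
  then show ?case
    using Suc.IH[OF \<open>tower (Suc k) < x\<close>] by (simp add: iln_sum_Suc[of "Suc k"] algebra_simps)
qed

section \<open>Bertrand series\<close>

lemma antimono_deriv_diff_bounds:
  fixes f f' :: "real \<Rightarrow> real"
  assumes deriv: "\<And>t. a < t \<Longrightarrow> (f has_real_derivative f' t) (at t)"
    and antimono: "\<And>s t. a < s \<Longrightarrow> s \<le> t \<Longrightarrow> f' t \<le> f' s"
    and "a < x" "x < y"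
  shows "(y - x) * f' y \<le> f y - f x" "f y - f x \<le> (y - x) * f' x"
proof -
  obtain z where z: "x < z" "z < y" "f y - f x = (y - x) * f' z"
    using MVT2[OF \<open>x < y\<close>, of f f'] deriv \<open>a < x\<close> by (meson less_le_trans)
  have "f' y \<le> f' z" "f' z \<le> f' x" using antimono z \<open>a < x\<close> by auto
  then show "(y - x) * f' y \<le> f y - f x" "f y - f x \<le> (y - x) * f' x"
    using z \<open>x < y\<close> by (simp_all add: mult_left_mono)
qed

lemma ratio_comparison_le:
  fixes a b :: "nat \<Rightarrow> real"
  assumes "\<And>n. 0 < a n" "\<And>n. 0 < b n"
    and ratio: "\<And>n. N \<le> n \<Longrightarrow> a (Suc n) / a n \<le> b (Suc n) / b n"
    and "N \<le> n"
  shows "a n \<le> a N / b N * b n"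
  using \<open>N \<le> n\<close>
proof (induction n rule: dec_induct)
  case (step n)
  have "a (Suc n) = a n * (a (Suc n) / a n)" using assms(1)[of n] by simp
  also have "\<dots> \<le> (a N / b N * b n) * (b (Suc n) / b n)"
    using step ratio[of n] assms(1,2) by (intro mult_mono) (auto intro: less_imp_le)
  also have "\<dots> = a N / b N * b (Suc n)" using assms(2)[of n] by simp
  finally show ?case .
qed (use assms(2)[of N] in simp)

lemma summable_ratio_comparison:
  fixes a b :: "nat \<Rightarrow> real"
  assumes "\<And>n. 0 < a n" "\<And>n. 0 < b n"
    and "\<forall>\<^sub>F n in sequentially. a (Suc n) / a n \<le> b (Suc n) / b n"
    and "summable b"
  shows "summable a"
proof -
  obtain N where "\<And>n. N \<le> n \<Longrightarrow> a (Suc n) / a n \<le> b (Suc n) / b n"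
    using assms(3) by (auto simp: eventually_sequentially)
  then have "norm (a n) \<le> a N / b N * b n" if "N \<le> n" for n
    using ratio_comparison_le[of a b N n] assms(1,2) that by (simp add: less_imp_le)
  then show ?thesis using summable_mult[OF \<open>summable b\<close>] summable_comparison_test' by blast
qed

lemma not_summable_diln: "\<not> summable (\<lambda>n. diln k (real n))"
proof
  assume "summable (\<lambda>n. diln k (real n))"
  define N where "N = Suc (nat \<lceil>tower k\<rceil>)"
  have N: "tower k < real (m + N)" for m unfolding N_def by linarith
  have "summable (\<lambda>m. diln k (real (m + N)))"
    using \<open>summable (\<lambda>n. diln k (real n))\<close> by (subst summable_iff_shift)
  have telescope: "iln k (real (M + N)) - iln k (real N) \<le> (\<Sum>m<M. diln k (real (m + N)))" for M
  proof (induction M)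
    case (Suc M)
    have "iln k (real (Suc M + N)) - iln k (real (M + N))
        \<le> (real (Suc M + N) - real (M + N)) * diln k (real (M + N))"
      using antimono_deriv_diff_bounds(2)[of "tower k" "iln k" "diln k" "real (M + N)" "real (Suc M + N)"]
        DERIV_iln diln_antimono N[of M] by simp
    then show ?case using Suc by simp
  qed simp
  have partial_sum_le: "(\<Sum>m<M. diln k (real (m + N))) \<le> (\<Sum>m. diln k (real (m + N)))" for M
    using \<open>summable (\<lambda>m. diln k (real (m + N)))\<close>
    by (rule sum_le_suminf) (auto intro: less_imp_le[OF diln_pos])
  have bounded: "iln k (real (M + N)) \<le> (\<Sum>m. diln k (real (m + N))) + iln k (real N)" for M
    using telescope[of M] partial_sum_le[of M] by linarith
  have "filterlim (\<lambda>M. iln k (real (M + N))) at_top sequentially"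
    using filterlim_compose[OF filterlim_iln_at_top
        filterlim_compose[OF filterlim_real_sequentially filterlim_add_const_nat_at_top]] .
  then have "\<forall>\<^sub>F M in sequentially.
      (\<Sum>m. diln k (real (m + N))) + iln k (real N) < iln k (real (M + N))"
    by (simp add: filterlim_at_top_dense)
  then obtain M where "(\<Sum>m. diln k (real (m + N))) + iln k (real N) < iln k (real (M + N))"
    using eventually_happens'[OF sequentially_bot] by blast
  with bounded show False by (meson not_le)
qed

text \<open>exp (- bertrand_log K c x) = 1 / (x * ln x * ... * ln_(K-1) x * (ln_(K) x) powr c):
  the general term of a Bertrand series.\<close>
definition bertrand_log :: "nat \<Rightarrow> real \<Rightarrow> real \<Rightarrow> real" where
  "bertrand_log K c x = iln_sum K x + c * iln (Suc K) x"

lemma DERIV_bertrand_log: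
  "tower (Suc K) < x \<Longrightarrow>
    (bertrand_log K c has_real_derivative (\<Sum>j=1..K. diln j x) + c * diln (Suc K) x) (at x)"
  unfolding bertrand_log_def[abs_def]
  using tower_less_mono[of K "Suc K" x] by (intro DERIV_add DERIV_cmult DERIV_iln_sum DERIV_iln) auto

lemma bertrand_log_mono:
  "0 \<le> c \<Longrightarrow> tower (Suc K) < s \<Longrightarrow> s \<le> t \<Longrightarrow> bertrand_log K c s \<le> bertrand_log K c t"
  unfolding bertrand_log_def
  using tower_less_mono[of K "Suc K" s] by (intro add_mono mult_left_mono iln_sum_mono iln_mono) auto

text \<open>exp ((1 - c) * iln (Suc K) x) is an antiderivative of -(c - 1) exp (- bertrand_log K c x).\<close>
lemma exp_neg_bertrand_log_le_diff:
  assumes "1 < c" "tower (Suc K) < x"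
  shows "(c - 1) * exp (- bertrand_log K c (x + 1))
    \<le> exp ((1 - c) * iln (Suc K) x) - exp ((1 - c) * iln (Suc K) (x + 1))"
proof -
  define H where "H x = exp ((1 - c) * iln (Suc K) x)" for x
  have "((\<lambda>x. - H x) has_real_derivative (c - 1) * exp (- bertrand_log K c t)) (at t)"
    if "tower (Suc K) < t" for t
  proof -
    have "((\<lambda>x. - H x) has_real_derivative
        - (exp ((1 - c) * iln (Suc K) t) * ((1 - c) * diln (Suc K) t))) (at t)"
      unfolding H_def using that by (intro DERIV_minus DERIV_chain2[OF DERIV_exp] DERIV_cmult DERIV_iln)
    moreover have "- (exp ((1 - c) * iln (Suc K) t) * ((1 - c) * diln (Suc K) t))
        = (c - 1) * exp (- bertrand_log K c t)"
      unfolding diln_def bertrand_log_def iln_sum_Suc by (simp add: exp_add[symmetric] algebra_simps)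
    ultimately show ?thesis by simp
  qed
  then show ?thesis
    using antimono_deriv_diff_bounds(1)[of "tower (Suc K)" "\<lambda>x. - H x"
        "\<lambda>x. (c - 1) * exp (- bertrand_log K c x)" x "x + 1"]
      bertrand_log_mono[of c K] assms
    by (simp add: H_def)
qed

lemma summable_exp_neg_bertrand_log:
  assumes "1 < c"
  shows "summable (\<lambda>n. exp (- bertrand_log K c (real n)))"
proof -
  define a where "a = tower (Suc K)"
  define H where "H x = exp ((1 - c) * iln (Suc K) x)" for x
  have H_step: "exp (- bertrand_log K c (x + 1)) \<le> (H x - H (x + 1)) / (c - 1)" if "a < x" for x
    using exp_neg_bertrand_log_le_diff[OF assms that[unfolded a_def]] assms
    by (simp add: H_def le_divide_eq mult.commute)
  define N where "N = Suc (nat \<lceil>a\<rceil>)"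
  have N: "a < real (m + N)" for m unfolding N_def by linarith
  have telescope: "(\<Sum>m<M. exp (- bertrand_log K c (real (m + N) + 1)))
      \<le> (H (real N) - H (real (M + N))) / (c - 1)" for M
  proof (induction M)
    case (Suc M)
    then show ?case using H_step[OF N[of M]] by (simp add: diff_divide_distrib add.commute)
  qed simp
  have "(H (real N) - H (real (M + N))) / (c - 1) \<le> H (real N) / (c - 1)" for M
    using assms by (simp add: H_def divide_right_mono)
  with telescope have "summable (\<lambda>m. exp (- bertrand_log K c (real (m + Suc N))))"
    by (intro summableI_nonneg_bounded[where x = "H (real N) / (c - 1)"])
      (auto simp: add.commute intro: order_trans)
  then show ?thesis by (subst (asm) summable_iff_shift)
qed

lemma one_plus_sum_diln_le_exp_iln_sum_diff:
  assumes "tower k < x"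
  shows "1 + (\<Sum>j=1..k. diln j (x + 1)) \<le> exp (iln_sum k (x + 1) - iln_sum k x)"
proof -
  have "((x + 1) - x) * (\<Sum>j=1..k. diln j (x + 1)) \<le> iln_sum k (x + 1) - iln_sum k x"
    using antimono_deriv_diff_bounds(1)[of "tower k" "iln_sum k" "\<lambda>x. \<Sum>j=1..k. diln j x" x "x + 1"]
      DERIV_iln_sum sum_diln_antimono assms by simp
  then have "(\<Sum>j=1..k. diln j (x + 1)) \<le> iln_sum k (x + 1) - iln_sum k x" by simp
  then show ?thesis using exp_ge_add_one_self[of "iln_sum k (x + 1) - iln_sum k x"] by linarith
qed

lemma eventually_inverse_square_le_diln:
  assumes "0 < e"
  shows "\<forall>\<^sub>F x in at_top. e / x\<^sup>2 \<le> diln (Suc K) x"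
proof -
  have "\<forall>\<^sub>F x in at_top. real K * ln (ln x) \<le> ln x - ln e" by real_asymp
  moreover have "\<forall>\<^sub>F x in at_top. tower (Suc K) < x" by (rule eventually_gt_at_top)
  ultimately show ?thesis
  proof eventually_elim
    case (elim x)
    then have "0 < x" using tower_nonneg[of "Suc K"] by linarith
    have "iln_sum (Suc K) x \<le> ln (x\<^sup>2) - ln e"
      using iln_sum_Suc_le[OF elim(2)] elim(1) \<open>0 < x\<close> by (simp add: ln_realpow)
    then have "exp (ln e - ln (x\<^sup>2)) \<le> diln (Suc K) x" by (simp add: diln_def)
    then show ?case using \<open>0 < x\<close> assms by (simp add: exp_diff)
  qed
qed

lemma bertrand_log_deriv_le:
  assumes "0 \<le> c'" "tower (Suc K) < x"
  shows "(\<Sum>j=1..K. diln j x) + c' * diln (Suc K) x \<le> (real K + c') / x"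
proof -
  have "0 < x" using assms(2) tower_nonneg[of "Suc K"] by linarith
  have le: "diln j x \<le> 1 / x" if "1 \<le> j" "j \<le> Suc K" for j
    using diln_le_diln_1[of j x] diln_1[OF \<open>0 < x\<close>] tower_less_mono[of j "Suc K" x] assms(2) that
    by simp
  have "(\<Sum>j=1..K. diln j x) \<le> real K * (1 / x)"
    using sum_bounded_above[of "{1..K}" "\<lambda>j. diln j x" "1 / x"] le by simp
  moreover have "c' * diln (Suc K) x \<le> c' * (1 / x)"
    using le[of "Suc K"] assms(1) by (intro mult_left_mono) auto
  ultimately show ?thesis by (simp add: add_divide_distrib)
qed

text \<open>With D the derivative of bertrand_log K c', the increment is at most D x and
  exp (D x) <= 1 + D x + (D x)^2, where (D x)^2 = O(1/x^2) fits into the slack (c - c') diln (Suc K) x.\<close>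
lemma eventually_exp_bertrand_log_diff_le:
  assumes "0 \<le> c'" "c' < c"
  shows "\<forall>\<^sub>F x in at_top. exp (bertrand_log K c' (x + 1) - bertrand_log K c' x)
    \<le> 1 + (\<Sum>j=1..K. diln j x) + c * diln (Suc K) x"
proof -
  define D where "D x = (\<Sum>j=1..K. diln j x) + c' * diln (Suc K) x" for x
  define A where "A = real K + c' + 1"
  have "0 < A" using assms by (simp add: A_def)
  have D_antimono: "D t \<le> D s" if "tower (Suc K) < s" "s \<le> t" for s t
    using sum_diln_antimono[of K s t] diln_antimono[of "Suc K" s t] tower_less_mono[of K "Suc K" s]
      that assms unfolding D_def by (simp add: add_mono mult_left_mono)
  have D_deriv: "(bertrand_log K c' has_real_derivative D t) (at t)" if "tower (Suc K) < t" for t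
    using DERIV_bertrand_log[OF that] unfolding D_def .
  have "\<forall>\<^sub>F x in at_top. A\<^sup>2 / (c - c') / x\<^sup>2 \<le> diln (Suc K) x"
    using \<open>0 < A\<close> assms by (intro eventually_inverse_square_le_diln) simp
  moreover have "\<forall>\<^sub>F x in at_top. max (tower (Suc K)) A < x" by (rule eventually_gt_at_top)
  ultimately show ?thesis
  proof eventually_elim
    case (elim x)
    then have x: "tower (Suc K) < x" "A < x" by auto
    then have "0 < x" using \<open>0 < A\<close> by simp
    have "0 \<le> D x" unfolding D_def using assms
      by (intro add_nonneg_nonneg sum_nonneg mult_nonneg_nonneg) (auto intro: less_imp_le[OF diln_pos])
    have "D x \<le> (real K + c') / x"
      unfolding D_def using assms(1) x(1) by (rule bertrand_log_deriv_le)
    also have "\<dots> \<le> A / x" using \<open>0 < x\<close> by (simp add: A_def divide_right_mono)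
    finally have "D x \<le> A / x" .
    moreover have "A / x < 1" using x \<open>0 < x\<close> by simp
    ultimately have "D x \<le> 1" by linarith
    have "(D x)\<^sup>2 \<le> (A / x)\<^sup>2" using \<open>D x \<le> A / x\<close> \<open>0 \<le> D x\<close> by (rule power_mono)
    also have "\<dots> = (c - c') * (A\<^sup>2 / (c - c') / x\<^sup>2)" using assms by (simp add: power_divide)
    also have "\<dots> \<le> (c - c') * diln (Suc K) x" using elim(1) assms by (intro mult_left_mono) auto
    finally have D_sq: "(D x)\<^sup>2 \<le> (c - c') * diln (Suc K) x" .
    have "bertrand_log K c' (x + 1) - bertrand_log K c' x \<le> ((x + 1) - x) * D x"
      by (rule antimono_deriv_diff_bounds(2)[of "tower (Suc K)" _ D])
        (use D_deriv D_antimono x(1) in auto)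
    then have "exp (bertrand_log K c' (x + 1) - bertrand_log K c' x) \<le> exp (D x)" by simp
    also have "\<dots> \<le> 1 + D x + (D x)\<^sup>2" using exp_bound \<open>0 \<le> D x\<close> \<open>D x \<le> 1\<close> by simp
    also have "\<dots> \<le> 1 + (\<Sum>j=1..K. diln j x) + c * diln (Suc K) x"
      using D_sq unfolding D_def by (simp add: algebra_simps)
    finally show ?case .
  qed
qed

section \<open>Recurrence criterion for birth-and-death chains\<close>

definition bd_rho :: "(nat \<Rightarrow> real) \<Rightarrow> (nat \<Rightarrow> real) \<Rightarrow> nat \<Rightarrow> real" where
  "bd_rho lam mu n = (\<Prod>i=1..n. mu i / lam i)"

definition bd_hit_prob :: "(nat \<Rightarrow> real) \<Rightarrow> (nat \<Rightarrow> real) \<Rightarrow> nat \<Rightarrow> real" where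
  "bd_hit_prob lam mu i = (SUP m. bd_hit lam mu m i)"

lemma bd_rho_0 [simp]: "bd_rho lam mu 0 = 1"
  by (simp add: bd_rho_def)

lemma bd_rho_Suc: "bd_rho lam mu (Suc n) = bd_rho lam mu n * (mu (Suc n) / lam (Suc n))"
  by (simp add: bd_rho_def prod.cl_ivl_Suc)

context
  fixes lam mu :: "nat \<Rightarrow> real"
  assumes pos: "\<And>n. lam n > 0" "\<And>n. mu n > 0"
begin

lemma bd_rho_pos: "bd_rho lam mu n > 0"
  unfolding bd_rho_def using pos by (intro prod_pos) auto

lemma bd_rho_ratio: "bd_rho lam mu (Suc n) / bd_rho lam mu n = mu (Suc n) / lam (Suc n)"
  using bd_rho_pos[of n] by (simp add: bd_rho_Suc)

lemma bd_weights_nonneg: "0 \<le> lam i / (lam i + mu i)" "0 \<le> mu i / (lam i + mu i)"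
  using pos[of i] by simp_all

lemma bd_harmonic_step_iff:
  "lam i / (lam i + mu i) * u + mu i / (lam i + mu i) * v = w
    \<longleftrightarrow> lam i * (w - u) = mu i * (v - w)"
proof -
  have "lam i + mu i \<noteq> 0" using pos[of i] by simp
  have "lam i / (lam i + mu i) * u + mu i / (lam i + mu i) * v = w
      \<longleftrightarrow> (lam i * u + mu i * v) / (lam i + mu i) = w"
    by (simp add: add_divide_distrib)
  also have "\<dots> \<longleftrightarrow> lam i * u + mu i * v = w * (lam i + mu i)"
    using \<open>lam i + mu i \<noteq> 0\<close> by (simp add: divide_eq_eq)
  also have "\<dots> \<longleftrightarrow> lam i * (w - u) = mu i * (v - w)"
    by (simp add: algebra_simps) (rule iffI; linarith)
  finally show ?thesis .
qed

lemma bd_hit_le_superharmonic: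
  assumes "\<And>i. 0 \<le> \<phi> i" "1 \<le> \<phi> 0"
    and super: "\<And>i. 0 < i \<Longrightarrow>
      lam i / (lam i + mu i) * \<phi> (Suc i) + mu i / (lam i + mu i) * \<phi> (i - 1) \<le> \<phi> i"
  shows "bd_hit lam mu m i \<le> \<phi> i"
proof (induction m arbitrary: i)
  case 0 then show ?case using assms(1,2) by simp
next
  case (Suc m)
  show ?case
  proof (cases "i = 0")
    case False
    have "lam i / (lam i + mu i) * bd_hit lam mu m (Suc i) \<le> lam i / (lam i + mu i) * \<phi> (Suc i)"
      "mu i / (lam i + mu i) * bd_hit lam mu m (i - 1) \<le> mu i / (lam i + mu i) * \<phi> (i - 1)"
      by (rule mult_left_mono[OF Suc.IH bd_weights_nonneg(1)] mult_left_mono[OF Suc.IH bd_weights_nonneg(2)])+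
    then show ?thesis using False super[of i] by (simp only: bd_hit.simps if_False) linarith
  qed (use assms(2) in simp)
qed

lemma bd_hit_bounds: "0 \<le> bd_hit lam mu m i" "bd_hit lam mu m i \<le> 1"
proof -
  show "bd_hit lam mu m i \<le> 1"
    using pos by (intro bd_hit_le_superharmonic) (simp_all add: add_divide_distrib[symmetric])
  show "0 \<le> bd_hit lam mu m i"
  proof (induction m arbitrary: i)
    case (Suc m) then show ?case using pos by (simp add: less_imp_le)
  qed simp
qed

lemma bd_hit_mono: "bd_hit lam mu m i \<le> bd_hit lam mu (Suc m) i"
proof (induction m arbitrary: i)
  case 0 then show ?case using bd_hit_bounds(1)[of "Suc 0" i] by auto
next
  case (Suc m)
  have "lam i / (lam i + mu i) * bd_hit lam mu m (Suc i) \<le> lam i / (lam i + mu i) * bd_hit lam mu (Suc m) (Suc i)"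
    "mu i / (lam i + mu i) * bd_hit lam mu m (i - 1) \<le> mu i / (lam i + mu i) * bd_hit lam mu (Suc m) (i - 1)"
    by (rule mult_left_mono[OF Suc.IH bd_weights_nonneg(1)] mult_left_mono[OF Suc.IH bd_weights_nonneg(2)])+
  then show ?case by (simp only: bd_hit.simps) auto
qed

lemma bd_hit_LIMSEQ: "(\<lambda>m. bd_hit lam mu m i) \<longlonglongrightarrow> bd_hit_prob lam mu i"
  unfolding bd_hit_prob_def
proof (rule LIMSEQ_incseq_SUP)
  show "bdd_above (range (\<lambda>m. bd_hit lam mu m i))"
    by (rule bdd_aboveI2[where M = 1]) (rule bd_hit_bounds(2))
  show "incseq (\<lambda>m. bd_hit lam mu m i)" using bd_hit_mono by (rule incseq_SucI)
qed

lemma bd_hit_prob_bounds: "0 \<le> bd_hit_prob lam mu i" "bd_hit_prob lam mu i \<le> 1"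
  using bd_hit_LIMSEQ bd_hit_bounds by (meson LIMSEQ_le_const LIMSEQ_le_const2)+

lemma bd_hit_prob_0: "bd_hit_prob lam mu 0 = 1"
proof -
  have "bd_hit lam mu m 0 = 1" for m by (cases m) simp_all
  then show ?thesis using bd_hit_LIMSEQ[of 0] by (simp add: LIMSEQ_const_iff)
qed

lemma bd_hit_prob_harmonic:
  assumes "0 < i"
  shows "bd_hit_prob lam mu i = lam i / (lam i + mu i) * bd_hit_prob lam mu (Suc i)
    + mu i / (lam i + mu i) * bd_hit_prob lam mu (i - 1)"
proof -
  have "(\<lambda>m. bd_hit lam mu (Suc m) i) \<longlonglongrightarrow> lam i / (lam i + mu i) * bd_hit_prob lam mu (Suc i)
      + mu i / (lam i + mu i) * bd_hit_prob lam mu (i - 1)"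
    using assms pos[of i] by (simp only: bd_hit.simps) (auto intro!: tendsto_intros bd_hit_LIMSEQ)
  moreover have "(\<lambda>m. bd_hit lam mu (Suc m) i) \<longlonglongrightarrow> bd_hit_prob lam mu i"
    using bd_hit_LIMSEQ by (rule LIMSEQ_Suc)
  ultimately show ?thesis using LIMSEQ_unique by blast
qed

text \<open>Any solution of the harmonic equation with h 0 = 1 has the form
  h N = 1 - (h 0 - h 1) * (rho 0 + ... + rho (N-1)); boundedness of h then forces h 1 = 1.\<close>
lemma bd_recurrent_if_not_summable:
  assumes "\<not> summable (bd_rho lam mu)"
  shows "bd_recurrent lam mu"
proof -
  define h where "h = bd_hit_prob lam mu"
  define d where "d i = h i - h (Suc i)" for i
  have "lam (Suc i) * d (Suc i) = mu (Suc i) * d i" for i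
    using bd_harmonic_step_iff[THEN iffD1, OF bd_hit_prob_harmonic[of "Suc i", symmetric]]
    unfolding d_def h_def by simp
  then have "d (Suc i) = d i * (mu (Suc i) / lam (Suc i))" for i
    using pos(1)[of "Suc i"] by (simp add: field_simps)
  then have d_eq: "d i = d 0 * bd_rho lam mu i" for i
    by (induction i) (simp_all add: bd_rho_Suc)
  have h_eq: "h N = 1 - d 0 * (\<Sum>i<N. bd_rho lam mu i)" for N
  proof (induction N)
    case (Suc N)
    then show ?case using d_eq[of N] unfolding d_def by (simp add: algebra_simps)
  qed (simp add: h_def bd_hit_prob_0)
  have "d 0 \<le> 0"
  proof (rule ccontr)
    assume "\<not> d 0 \<le> 0"
    then have "(\<Sum>i<N. bd_rho lam mu i) \<le> 1 / d 0" for N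
      using h_eq[of N] bd_hit_prob_bounds(1)[of N] by (simp add: h_def field_simps)
    then have "summable (bd_rho lam mu)"
      using bd_rho_pos by (intro summableI_nonneg_bounded) (auto intro: less_imp_le)
    with assms show False by simp
  qed
  then have "h 1 = 1" using bd_hit_prob_bounds(2)[of 1] bd_hit_prob_0 by (simp add: d_def h_def)
  then show ?thesis by (simp add: bd_recurrent_def bd_return_prob_def h_def bd_hit_prob_def)
qed

lemma bd_transient_if_summable:
  assumes "summable (bd_rho lam mu)"
  shows "bd_transient lam mu"
proof -
  define T where "T = suminf (bd_rho lam mu)"
  have partial_le: "(\<Sum>n<i. bd_rho lam mu n) \<le> T" for i
    unfolding T_def using assms bd_rho_pos by (intro sum_le_suminf) (auto intro: less_imp_le)
  have "1 \<le> T" using partial_le[of 1] by simp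
  define \<phi> where "\<phi> i = 1 - (\<Sum>n<i. bd_rho lam mu n) / T" for i
  have "bd_hit lam mu m 1 \<le> \<phi> 1" for m
  proof (rule bd_hit_le_superharmonic)
    show "0 \<le> \<phi> i" for i using partial_le[of i] \<open>1 \<le> T\<close> by (simp add: \<phi>_def field_simps)
    show "1 \<le> \<phi> 0" by (simp add: \<phi>_def)
    fix i :: nat assume "0 < i"
    then obtain j where j: "i = Suc j" by (cases i) auto
    have "lam i * bd_rho lam mu i = mu i * bd_rho lam mu j"
      using pos[of i] by (simp add: j bd_rho_Suc)
    moreover have "\<phi> i - \<phi> (Suc i) = bd_rho lam mu i / T" "\<phi> (i - 1) - \<phi> i = bd_rho lam mu j / T"
      by (simp_all add: \<phi>_def j diff_divide_distrib[symmetric])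
    ultimately have "lam i * (\<phi> i - \<phi> (Suc i)) = mu i * (\<phi> (i - 1) - \<phi> i)" by simp
    then have "lam i / (lam i + mu i) * \<phi> (Suc i) + mu i / (lam i + mu i) * \<phi> (i - 1) = \<phi> i"
      by (rule bd_harmonic_step_iff[THEN iffD2])
    then show "lam i / (lam i + mu i) * \<phi> (Suc i) + mu i / (lam i + mu i) * \<phi> (i - 1) \<le> \<phi> i"
      by linarith
  qed
  then have "bd_return_prob lam mu \<le> \<phi> 1"
    unfolding bd_return_prob_def by (intro cSUP_least) auto
  moreover have "\<phi> 1 < 1" using \<open>1 \<le> T\<close> by (simp add: \<phi>_def)
  ultimately show ?thesis by (simp add: bd_transient_def bd_recurrent_def)
qed

lemma bd_recurrent_iff_not_summable: "bd_recurrent lam mu \<longleftrightarrow> \<not> summable (bd_rho lam mu)"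
  using bd_recurrent_if_not_summable bd_transient_if_summable by (auto simp: bd_transient_def)


lemma summable_bd_rho_if_ratio_ge:
  assumes "1 < c"
    and ratio: "\<forall>\<^sub>F n in sequentially.
      1 + (\<Sum>j=1..K. diln j (real n)) + c * diln (Suc K) (real n) \<le> lam n / mu n"
  shows "summable (bd_rho lam mu)"
proof -
  define c' where "c' = (1 + c) / 2"
  have "1 < c'" "c' < c" using \<open>1 < c\<close> by (auto simp: c'_def)
  define F where "F = bertrand_log K c'"
  define b where "b n = exp (- F (real (Suc n)))" for n
  have b_pos: "0 < b n" for n by (simp add: b_def)
  have "summable b"
    using summable_exp_neg_bertrand_log[OF \<open>1 < c'\<close>, of K]
    unfolding b_def F_def by (subst summable_Suc_iff)
  have "\<forall>\<^sub>F x in at_top. exp (F (x + 1) - F x) \<le> 1 + (\<Sum>j=1..K. diln j x) + c * diln (Suc K) x"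
    unfolding F_def using \<open>1 < c'\<close> \<open>c' < c\<close> by (intro eventually_exp_bertrand_log_diff_le) auto
  from eventually_compose_filterlim[OF this filterlim_real_sequentially] ratio
  have "\<forall>\<^sub>F n in sequentially. exp (F (real n + 1) - F (real n)) \<le> lam n / mu n"
    by eventually_elim (rule order_trans)
  then have "\<forall>\<^sub>F n in sequentially.
      exp (F (real (Suc n) + 1) - F (real (Suc n))) \<le> lam (Suc n) / mu (Suc n)"
    by (subst eventually_sequentially_Suc)
  then have "\<forall>\<^sub>F n in sequentially. bd_rho lam mu (Suc n) / bd_rho lam mu n \<le> b (Suc n) / b n"
  proof eventually_elim
    case (elim n)
    have "bd_rho lam mu (Suc n) / bd_rho lam mu n = 1 / (lam (Suc n) / mu (Suc n))"
      using bd_rho_ratio by simp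
    also have "\<dots> \<le> 1 / exp (F (real (Suc n) + 1) - F (real (Suc n)))"
    proof (rule divide_left_mono[OF elim])
      show "0 < lam (Suc n) / mu (Suc n) * exp (F (real (Suc n) + 1) - F (real (Suc n)))"
        using pos[of "Suc n"] by simp
    qed simp
    also have "\<dots> = b (Suc n) / b n" unfolding b_def by (simp add: exp_diff exp_minus add.commute field_simps)
    finally show ?case .
  qed
  then show ?thesis
    using \<open>summable b\<close> by (rule summable_ratio_comparison[OF bd_rho_pos b_pos])
qed

lemma not_summable_bd_rho_if_ratio_le:
  assumes ratio: "\<forall>\<^sub>F n in sequentially. lam n / mu n \<le> 1 + (\<Sum>j=1..k. diln j (real n))"
  shows "\<not> summable (bd_rho lam mu)"
proof
  assume "summable (bd_rho lam mu)"
  have "\<forall>\<^sub>F n in sequentially. tower k < real n"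
    using eventually_compose_filterlim[OF eventually_gt_at_top filterlim_real_sequentially] .
  moreover have "\<forall>\<^sub>F n in sequentially.
      lam (Suc n) / mu (Suc n) \<le> 1 + (\<Sum>j=1..k. diln j (real (Suc n)))"
    using ratio by (subst eventually_sequentially_Suc)
  ultimately have "\<forall>\<^sub>F n in sequentially.
      diln k (real (Suc n)) / diln k (real n) \<le> bd_rho lam mu (Suc n) / bd_rho lam mu n"
  proof eventually_elim
    case (elim n)
    have "lam (Suc n) / mu (Suc n) \<le> 1 + (\<Sum>j=1..k. diln j (real n + 1))"
      using elim(2) by (simp add: add.commute)
    also have "\<dots> \<le> exp (iln_sum k (real n + 1) - iln_sum k (real n))"
      using elim(1) by (rule one_plus_sum_diln_le_exp_iln_sum_diff)
    finally have "lam (Suc n) / mu (Suc n) \<le> exp (iln_sum k (real n + 1) - iln_sum k (real n))" .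
    then have "1 / exp (iln_sum k (real n + 1) - iln_sum k (real n)) \<le> 1 / (lam (Suc n) / mu (Suc n))"
      using pos[of "Suc n"] by (intro divide_left_mono) auto
    then show ?case using bd_rho_ratio
      by (simp add: diln_def exp_diff exp_minus field_simps)
  qed
  then have "summable (\<lambda>n. diln k (real n))"
    using \<open>summable (bd_rho lam mu)\<close>
    by (rule summable_ratio_comparison[OF diln_pos bd_rho_pos])
  with not_summable_diln show False by blast
qed

lemma bd_transient_if_ratio_ge:
  assumes "1 < c" "1 \<le> K"
    and hyp: "\<And>n. real n > n0 \<Longrightarrow>
      lam n / mu n \<ge> 1 + 1 / real n
        + (\<Sum>k=1..K-1. 1 / (real n * (\<Prod>j=1..k. iln j (real n))))
        + c / (real n * (\<Prod>k=1..K. iln k (real n)))"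
  shows "bd_transient lam mu"
proof -
  obtain K' where K': "K = Suc K'" using \<open>1 \<le> K\<close> not0_implies_Suc by fastforce
  have "\<forall>\<^sub>F n in sequentially. max n0 (tower (Suc K)) < real n"
    using eventually_compose_filterlim[OF eventually_gt_at_top filterlim_real_sequentially] .
  then have "\<forall>\<^sub>F n in sequentially.
      1 + (\<Sum>j=1..K. diln j (real n)) + c * diln (Suc K) (real n) \<le> lam n / mu n"
  proof eventually_elim
    case (elim n)
    then have "tower (Suc K) < real n" by simp
    then have "1 / real n + (\<Sum>k=1..K-1. 1 / (real n * (\<Prod>j=1..k. iln j (real n))))
        = (\<Sum>j=1..K. diln j (real n))"
      using sum_inverse_prod_iln_eq[of K' "real n"] tower_less_mono[of K "Suc K"] K' by simp
    moreover have "c / (real n * (\<Prod>k=1..K. iln k (real n))) = c * diln (Suc K) (real n)"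
      by (simp add: diln_Suc_eq[OF \<open>tower (Suc K) < real n\<close>])
    ultimately show ?case using hyp[of n] elim by linarith
  qed
  then show ?thesis
    using summable_bd_rho_if_ratio_ge[OF \<open>1 < c\<close>] bd_recurrent_iff_not_summable
    by (simp add: bd_transient_def)
qed

lemma bd_recurrent_if_ratio_le:
  assumes hyp: "\<And>n. real n > n0 \<Longrightarrow>
      lam n / mu n \<le> 1 + 1 / real n + (\<Sum>k=1..K. 1 / (real n * (\<Prod>j=1..k. iln j (real n))))"
  shows "bd_recurrent lam mu"
proof -
  have "\<forall>\<^sub>F n in sequentially. max n0 (tower (Suc K)) < real n"
    using eventually_compose_filterlim[OF eventually_gt_at_top filterlim_real_sequentially] .
  then have "\<forall>\<^sub>F n in sequentially. lam n / mu n \<le> 1 + (\<Sum>j=1..Suc K. diln j (real n))"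
  proof eventually_elim
    case (elim n)
    then show ?case using hyp[of n] sum_inverse_prod_iln_eq[of K "real n"] by simp
  qed
  then show ?thesis
    using not_summable_bd_rho_if_ratio_le bd_recurrent_iff_not_summable by blast
qed

end

theorem lemma2:
  fixes lam mu :: "nat \<Rightarrow> real"
  assumes pos: "\<And>n. lam n > 0" "\<And>n. mu n > 0"
  shows "((\<exists>c K n0. c > 1 \<and> K \<ge> 1 \<and> (\<forall>n. real n > n0 \<longrightarrow>
            lam n / mu n \<ge> 1 + 1 / real n
              + (\<Sum>k=1..K-1. 1 / (real n * (\<Prod>j=1..k. iln j (real n))))
              + c / (real n * (\<Prod>k=1..K. iln k (real n)))))
           \<longrightarrow> bd_transient lam mu)
    \<and> ((\<exists>K n0. K \<ge> 1 \<and> (\<forall>n. real n > n0 \<longrightarrow>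
            lam n / mu n \<le> 1 + 1 / real n
              + (\<Sum>k=1..K. 1 / (real n * (\<Prod>j=1..k. iln j (real n))))))
           \<longrightarrow> bd_recurrent lam mu)"
  using bd_transient_if_ratio_ge[of lam mu, OF pos] bd_recurrent_if_ratio_le[of lam mu, OF pos] by blast

end
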